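(* For every type $T$ there exist a unit type $U$ and a scalar $\alpha\in\mathcal S$ such that $T\equiv\alpha.U$.
   Context: Fix a commutative ring $(\mathcal S,+,\times)$. Types: $T ::= U \mid \forall X.T \mid \alpha.T \mid \overline0$; unit types: $U ::= X \mid U\to T \mid \forall X.U$ ($\alpha\in\mathcal S$, $X$ type variables). Type equivalence $\equiv$ is the least congruence on types with $\alpha.\overline0\equiv\overline0$, $0.T\equiv\overline0$, $1.T\equiv T$, $\alpha.(\beta.T)\equiv(\alpha\times\beta).T$, $\forall X.\alpha.T\equiv\alpha.\forall X.T$. *)

theory Defs
  imports Main
begin

datatype ('v, 's) ty =
    TVar 'v
  | Arr "('v, 's) ty" "('v, 's) ty"
  | Forall 'v "('v, 's) ty"
  | Scal 's "('v, 's) ty"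
  | Zero

inductive is_unit :: "('v, 's) ty \<Rightarrow> bool" and is_type :: "('v, 's) ty \<Rightarrow> bool" where
  u_var: "is_unit (TVar X)"
| u_arr: "is_unit U \<Longrightarrow> is_type T \<Longrightarrow> is_unit (Arr U T)"
| u_all: "is_unit U \<Longrightarrow> is_unit (Forall X U)"
| t_unit: "is_unit U \<Longrightarrow> is_type U"
| t_all: "is_type T \<Longrightarrow> is_type (Forall X T)"
| t_scal: "is_type T \<Longrightarrow> is_type (Scal a T)"
| t_zero: "is_type Zero"

inductive teq :: "('v, 's::comm_ring_1) ty \<Rightarrow> ('v, 's) ty \<Rightarrow> bool" where
  ax_scal_zero: "teq (Scal a Zero) Zero"
| ax_zero_scal: "is_type T \<Longrightarrow> teq (Scal 0 T) Zero"
| ax_one_scal: "is_type T \<Longrightarrow> teq (Scal 1 T) T"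
| ax_scal_scal: "is_type T \<Longrightarrow> teq (Scal a (Scal b T)) (Scal (a * b) T)"
| ax_all_scal: "is_type T \<Longrightarrow> teq (Forall X (Scal a T)) (Scal a (Forall X T))"
| refl: "is_type T \<Longrightarrow> teq T T"
| sym: "teq T T' \<Longrightarrow> teq T' T"
| trans: "teq T1 T2 \<Longrightarrow> teq T2 T3 \<Longrightarrow> teq T1 T3"
| cong_arr: "is_unit U \<Longrightarrow> is_unit U' \<Longrightarrow> teq U U' \<Longrightarrow> teq T T' \<Longrightarrow> teq (Arr U T) (Arr U' T')"
| cong_all: "teq T T' \<Longrightarrow> teq (Forall X T) (Forall X T')"
| cong_scal: "teq T T' \<Longrightarrow> teq (Scal a T) (Scal a T')"

end

theory Submission
  imports Defs
begin

text \<open>Induction on the grammar of types: a unit is \<open>1.U\<close>, and the constructors \<forall>, scalar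
  multiplication and \<open>0\<close> each preserve the shape \<open>\<alpha>.U\<close> up to \<open>\<equiv>\<close>, using the axioms that
  pull scalars out of \<forall>, merge nested scalars and write \<open>0\<close> as \<open>0.X\<close>.\<close>

lemma teq_unit_one_scal:
  "is_unit U \<Longrightarrow> teq U (Scal 1 U)"
  by (rule teq.sym, rule teq.ax_one_scal, rule is_unit_is_type.t_unit)

lemma teq_forall_scal_unit:
  assumes "is_unit U" and "teq T (Scal a U)"
  shows "teq (Forall X T) (Scal a (Forall X U))"
proof (rule teq.trans)
  show "teq (Forall X T) (Forall X (Scal a U))" using assms(2) by (rule teq.cong_all)
  show "teq (Forall X (Scal a U)) (Scal a (Forall X U))"
    using assms(1) by (intro teq.ax_all_scal is_unit_is_type.t_unit)
qed

lemma teq_scal_scal_unit: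
  assumes "is_unit U" and "teq T (Scal a U)"
  shows "teq (Scal b T) (Scal (b * a) U)"
proof (rule teq.trans)
  show "teq (Scal b T) (Scal b (Scal a U))" using assms(2) by (rule teq.cong_scal)
  show "teq (Scal b (Scal a U)) (Scal (b * a) U)"
    using assms(1) by (intro teq.ax_scal_scal is_unit_is_type.t_unit)
qed

lemma teq_zero_zero_scal: "teq Zero (Scal 0 (TVar X))"
  by (rule teq.sym, rule teq.ax_zero_scal, rule is_unit_is_type.t_unit, rule is_unit_is_type.u_var)

theorem mainTheorem17:
  fixes T :: "('v, 's::comm_ring_1) ty"
  assumes "is_type T"
  shows "\<exists>U \<alpha>. is_unit U \<and> teq T (Scal \<alpha> U)"
  using assms
proof (induction rule: is_unit_is_type.inducts(2)[where ?P1.0 = "\<lambda>_. True"])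
  case (t_unit U)
  then have "is_unit U" "teq U (Scal 1 U)" by (simp_all add: teq_unit_one_scal)
  then show ?case by blast
next
  case (t_all T X)
  then obtain U a where "is_unit U" "teq T (Scal a U)" by blast
  then have "is_unit (Forall X U)" "teq (Forall X T) (Scal a (Forall X U))"
    by (simp_all add: is_unit_is_type.u_all teq_forall_scal_unit)
  then show ?case by blast
next
  case (t_scal T b)
  then obtain U a where "is_unit U" "teq T (Scal a U)" by blast
  then have "teq (Scal b T) (Scal (b * a) U)" by (rule teq_scal_scal_unit)
  with \<open>is_unit U\<close> show ?case by blast
next
  case t_zero
  have "is_unit (TVar undefined)" "teq Zero (Scal 0 (TVar undefined))"
    by (rule is_unit_is_type.u_var, rule teq_zero_zero_scal)
  then show ?case by blast
qed simp_all

end
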